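(* Let $H$ be a real Hilbert space with inner product $(\cdot,\cdot)_H$ and norm $\|\cdot\|_H$, and let $f:H\to\mathbb{R}$ be Fréchet differentiable with gradient $\nabla f$ Lipschitz continuous with constant $L$. Then for any $\Phi^{n-1},\Phi^n,\Phi^{n+1}\in H$, $$d_{2t}f(\Phi^{n+1})\le\big(d_{2t}\Phi^{n+1},\,2\nabla f(\Phi^n)-\nabla f(\Phi^{n-1})\big)_H+3L\|d_t\Phi^{n+1}\|_H^2+3L\|d_t\Phi^n\|_H^2,$$ $$d_tf(\Phi^{n+1})\le\big(d_t\Phi^{n+1},\,\tfrac32\nabla f(\Phi^n)-\tfrac12\nabla f(\Phi^{n-1})\big)_H+\tfrac{3L}{4}\|d_t\Phi^{n+1}\|_H^2+\tfrac{L}{4}\|d_t\Phi^n\|_H^2.$$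
   Context: Difference operators: $d_t(\bullet)^{n+1}=(\bullet)^{n+1}-(\bullet)^n$ (so $d_t\Phi^n=\Phi^n-\Phi^{n-1}$), $d_{2t}(\bullet)^{n+1}=3(\bullet)^{n+1}-4(\bullet)^n+(\bullet)^{n-1}$; applied to $f$ these mean e.g. $d_{2t}f(\Phi^{n+1})=3f(\Phi^{n+1})-4f(\Phi^n)+f(\Phi^{n-1})$. *)

theory Defs
  imports "HOL-Analysis.Analysis"
begin

end

theory Submission
  imports Defs
begin

(* Apply the descent lemma f y - f x <= (y - x) . grad f x + L/2 |y - x|^2 from the centre
   Phi^n to Phi^(n+1) and to Phi^(n-1). Replacing grad f(Phi^n) by the extrapolated gradient
   costs inner products with grad f(Phi^n) - grad f(Phi^(n-1)), which Cauchy-Schwarz, the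
   Lipschitz bound and 2ab <= a^2 + b^2 absorb into the quadratic error terms. *)

lemma has_real_derivative_along_line:
  fixes f :: "'a::real_inner \<Rightarrow> real"
  assumes "\<And>y. (f has_derivative (\<lambda>h. gradf y \<bullet> h)) (at y)"
  shows "((\<lambda>t. f (x + t *\<^sub>R v)) has_real_derivative gradf (x + t *\<^sub>R v) \<bullet> v) (at t)"
proof -
  have "((\<lambda>t. x + t *\<^sub>R v) has_derivative (\<lambda>s. s *\<^sub>R v)) (at t)"
    by (auto intro!: derivative_eq_intros)
  from has_derivative_compose[OF this assms]
  have "((\<lambda>t. f (x + t *\<^sub>R v)) has_derivative (\<lambda>s. gradf (x + t *\<^sub>R v) \<bullet> (s *\<^sub>R v))) (at t)"
    by (simp add: o_def)
  moreover have "(\<lambda>s. gradf (x + t *\<^sub>R v) \<bullet> (s *\<^sub>R v)) = (*) (gradf (x + t *\<^sub>R v) \<bullet> v)"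
    by (auto simp: mult.commute)
  ultimately show ?thesis
    by (simp add: has_field_derivative_def)
qed

lemma lipschitz_gradient_descent_ineq:
  fixes f :: "'a::real_inner \<Rightarrow> real"
  assumes grad: "\<And>x. (f has_derivative (\<lambda>h. gradf x \<bullet> h)) (at x)"
    and lip: "L-lipschitz_on UNIV gradf"
  shows "f y - f x \<le> (y - x) \<bullet> gradf x + L / 2 * (norm (y - x))\<^sup>2"
proof -
  define v where "v = y - x"
  define g where "g t = f (x + t *\<^sub>R v) - t * (gradf x \<bullet> v) - L / 2 * t\<^sup>2 * (norm v)\<^sup>2" for t
  define g' where "g' t = (gradf (x + t *\<^sub>R v) - gradf x) \<bullet> v - L * t * (norm v)\<^sup>2" for t
  have deriv: "(g has_real_derivative g' t) (at t)" for t
    unfolding g_def g'_def using has_real_derivative_along_line[OF grad]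
    by (auto intro!: derivative_eq_intros simp: power2_eq_square algebra_simps inner_diff_left)
  have g'_nonpos: "g' t \<le> 0" if "0 \<le> t" for t
  proof -
    have "(gradf (x + t *\<^sub>R v) - gradf x) \<bullet> v \<le> norm (gradf (x + t *\<^sub>R v) - gradf x) * norm v"
      by (rule norm_cauchy_schwarz)
    also have "\<dots> \<le> L * norm (x + t *\<^sub>R v - x) * norm v"
      using lipschitz_onD[OF lip, of "x + t *\<^sub>R v" x] by (simp add: dist_norm mult_right_mono)
    also have "\<dots> = L * t * (norm v)\<^sup>2"
      using that by (simp add: power2_eq_square)
    finally show ?thesis
      unfolding g'_def by simp
  qed
  obtain t where "0 < t" "g 1 - g 0 = g' t"
    using MVT2[of 0 1 g g'] deriv by auto
  with g'_nonpos[of t] have "g 1 \<le> g 0"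
    by simp
  then show ?thesis
    unfolding g_def v_def by (simp add: inner_commute)
qed

lemma inner_lipschitz_diff_le:
  assumes "L-lipschitz_on UNIV F"
  shows "\<bar>u \<bullet> (F x - F y)\<bar> \<le> L * norm u * norm (x - y)"
proof -
  have "\<bar>u \<bullet> (F x - F y)\<bar> \<le> norm u * norm (F x - F y)"
    by (rule Cauchy_Schwarz_ineq2)
  also have "\<dots> \<le> norm u * (L * norm (x - y))"
    using lipschitz_onD[OF assms, of x y] by (simp add: dist_norm mult_left_mono)
  finally show ?thesis
    by (simp add: algebra_simps)
qed

lemma nonneg_mult_le_half_sum_squares:
  fixes L a b :: real
  assumes "0 \<le> L"
  shows "L * a * b \<le> L / 2 * (a\<^sup>2 + b\<^sup>2)"
  using mult_left_mono[OF sum_squares_bound[of a b] assms] by (simp add: algebra_simps)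

lemma lipschitz_gradient_bdf2_ineq:
  fixes f :: "'a::real_inner \<Rightarrow> real"
  assumes grad: "\<And>x. (f has_derivative (\<lambda>h. gradf x \<bullet> h)) (at x)"
    and lip: "L-lipschitz_on UNIV gradf"
  shows "3 * f z - 4 * f y + f x
           \<le> (3 *\<^sub>R z - 4 *\<^sub>R y + x) \<bullet> (2 *\<^sub>R gradf y - gradf x)
             + 3 * L * (norm (z - y))\<^sup>2 + 3 * L * (norm (y - x))\<^sup>2"
proof -
  define a b d where "a = z - y" and "b = y - x" and "d = gradf y - gradf x"
  have forward: "f z - f y \<le> a \<bullet> gradf y + L / 2 * (norm a)\<^sup>2"
    using lipschitz_gradient_descent_ineq[OF grad lip, of z y] by (simp add: a_def)
  have backward: "f x - f y \<le> - (b \<bullet> gradf y) + L / 2 * (norm b)\<^sup>2"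
    using lipschitz_gradient_descent_ineq[OF grad lip, of x y]
    by (simp add: b_def norm_minus_commute inner_diff_left)
  have "\<bar>a \<bullet> d\<bar> \<le> L / 2 * ((norm a)\<^sup>2 + (norm b)\<^sup>2)"
    using inner_lipschitz_diff_le[OF lip, of a y x]
      nonneg_mult_le_half_sum_squares[OF lipschitz_on_nonneg[OF lip], of "norm a" "norm b"]
    by (simp add: d_def b_def)
  moreover have "\<bar>b \<bullet> d\<bar> \<le> L * (norm b)\<^sup>2"
    using inner_lipschitz_diff_le[OF lip, of b y x] by (simp add: d_def b_def power2_eq_square)
  moreover have "(3 *\<^sub>R z - 4 *\<^sub>R y + x) \<bullet> (2 *\<^sub>R gradf y - gradf x)
      = 3 * (a \<bullet> gradf y) - b \<bullet> gradf y + 3 * (a \<bullet> d) - b \<bullet> d"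
    unfolding a_def b_def d_def
    by (simp add: inner_diff_left inner_diff_right inner_add_left algebra_simps)
  ultimately show ?thesis
    using forward backward unfolding a_def[symmetric] b_def[symmetric]
    by (simp add: abs_le_iff algebra_simps)
qed

lemma lipschitz_gradient_extrapolated_ineq:
  fixes f :: "'a::real_inner \<Rightarrow> real"
  assumes grad: "\<And>x. (f has_derivative (\<lambda>h. gradf x \<bullet> h)) (at x)"
    and lip: "L-lipschitz_on UNIV gradf"
  shows "f z - f y
           \<le> (z - y) \<bullet> ((3/2) *\<^sub>R gradf y - (1/2) *\<^sub>R gradf x)
             + (3 * L / 4) * (norm (z - y))\<^sup>2 + (L / 4) * (norm (y - x))\<^sup>2"
proof -
  define a d where "a = z - y" and "d = gradf y - gradf x"
  have "\<bar>a \<bullet> d\<bar> \<le> L / 2 * ((norm a)\<^sup>2 + (norm (y - x))\<^sup>2)"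
    using inner_lipschitz_diff_le[OF lip, of a y x]
      nonneg_mult_le_half_sum_squares[OF lipschitz_on_nonneg[OF lip], of "norm a" "norm (y - x)"]
    by (simp add: d_def)
  moreover have "a \<bullet> ((3/2) *\<^sub>R gradf y - (1/2) *\<^sub>R gradf x) = a \<bullet> gradf y + (1/2) * (a \<bullet> d)"
    by (simp add: d_def inner_diff_right algebra_simps)
  ultimately show ?thesis
    using lipschitz_gradient_descent_ineq[OF grad lip, of z y] unfolding a_def
    by (simp add: abs_le_iff algebra_simps)
qed

theorem lemma3p6:
  fixes f :: "'a::{real_inner, complete_space} \<Rightarrow> real"
    and gradf :: "'a \<Rightarrow> 'a"
    and L :: real
    and Phi_prev Phi_n Phi_next :: 'a
  assumes frechet: "\<And>x. (f has_derivative (\<lambda>h. gradf x \<bullet> h)) (at x)"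
    and lip: "L-lipschitz_on UNIV gradf"
  shows "(3 * f Phi_next - 4 * f Phi_n + f Phi_prev
           \<le> (3 *\<^sub>R Phi_next - 4 *\<^sub>R Phi_n + Phi_prev) \<bullet> (2 *\<^sub>R gradf Phi_n - gradf Phi_prev)
             + 3 * L * (norm (Phi_next - Phi_n))\<^sup>2 + 3 * L * (norm (Phi_n - Phi_prev))\<^sup>2)
         \<and> (f Phi_next - f Phi_n
           \<le> (Phi_next - Phi_n) \<bullet> ((3/2) *\<^sub>R gradf Phi_n - (1/2) *\<^sub>R gradf Phi_prev)
             + (3 * L / 4) * (norm (Phi_next - Phi_n))\<^sup>2 + (L / 4) * (norm (Phi_n - Phi_prev))\<^sup>2)"
  using lipschitz_gradient_bdf2_ineq[OF frechet lip]
    lipschitz_gradient_extrapolated_ineq[OF frechet lip]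
  by blast

end
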